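(* Let $L$ be a finite loop and let $Z_2 = \{0,1\}$ be the Boolean near-ring with addition modulo $2$ and multiplication $a\cdot b = a$ for all $a,b\in Z_2$. Then the near loop ring $Z_2L$ has a subnear-ring $S \neq \{0\}$ which is a Boolean near-ring (i.e. $x\cdot x = x$ for all $x \in S$).
   Context: A loop is a set $L$ with a binary operation (written multiplicatively) and an identity $e$ such that for all $a,b \in L$ the equations $ax = b$ and $ya = b$ have unique solutions $x, y\in L$. The near loop ring $Z_2L$ consists of all formal sums $\sum_{m \in L} \alpha(m) m$ with $\alpha(m) \in Z_2$; addition is coefficientwise, and the product of $\alpha = \sum_{m \in \operatorname{supp}\alpha} \alpha(m) m$ and $\beta = \sum_{k \in \operatorname{supp}\beta} \beta(k) k$ (where $\operatorname{supp}$ denotes the set of loop elements with nonzero coefficient) is $\sum_{m \in \operatorname{supp}\alpha,\, k\in\operatorname{supp}\beta} (\alpha(m)\cdot\beta(k))\, mk$, like terms being collected by addition in $Z_2$; the element $1\cdot e$ is identified with $1$. A subnear-ring is a subset that is a subgroup under addition and closed under multiplication. *)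

theory Defs
  imports Main
begin

definition loop :: "'a set \<Rightarrow> ('a \<Rightarrow> 'a \<Rightarrow> 'a) \<Rightarrow> 'a \<Rightarrow> bool" where
  "loop L f e \<longleftrightarrow> e \<in> L \<and> (\<forall>a\<in>L. \<forall>b\<in>L. f a b \<in> L)
     \<and> (\<forall>a\<in>L. f e a = a \<and> f a e = a)
     \<and> (\<forall>a\<in>L. \<forall>b\<in>L. \<exists>!x. x \<in> L \<and> f a x = b)
     \<and> (\<forall>a\<in>L. \<forall>b\<in>L. \<exists>!y. y \<in> L \<and> f y a = b)"

text \<open>The Boolean near-ring Z2 = {0,1} encoded as bool (False = 0, True = 1):
  addition modulo 2, negation, and multiplication a * b = a.\<close>
definition z2_add :: "bool \<Rightarrow> bool \<Rightarrow> bool" where "z2_add a b = (a \<noteq> b)"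
definition z2_neg :: "bool \<Rightarrow> bool" where "z2_neg a = a"
definition z2_mult :: "bool \<Rightarrow> bool \<Rightarrow> bool" where "z2_mult a b = a"

text \<open>Near loop ring Z2L: formal sums = coefficient functions supported in L.\<close>
definition nlr_carrier :: "'a set \<Rightarrow> ('a \<Rightarrow> bool) set" where
  "nlr_carrier L = {\<alpha>. \<forall>m. \<alpha> m \<longrightarrow> m \<in> L}"

definition nlr_zero :: "'a \<Rightarrow> bool" where "nlr_zero = (\<lambda>_. False)"

definition nlr_add :: "('a \<Rightarrow> bool) \<Rightarrow> ('a \<Rightarrow> bool) \<Rightarrow> ('a \<Rightarrow> bool)" where
  "nlr_add \<alpha> \<beta> = (\<lambda>m. z2_add (\<alpha> m) (\<beta> m))"

definition nlr_neg :: "('a \<Rightarrow> bool) \<Rightarrow> ('a \<Rightarrow> bool)" where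
  "nlr_neg \<alpha> = (\<lambda>m. z2_neg (\<alpha> m))"

text \<open>Product: sum over m in supp alpha, k in supp beta of (alpha m * beta k) (m k),
  collecting like terms in Z2: coefficient of g is the parity of the number of
  pairs (m,k) with nonzero coefficient product and m k = g.\<close>
definition nlr_mult :: "('a \<Rightarrow> 'a \<Rightarrow> 'a) \<Rightarrow> ('a \<Rightarrow> bool) \<Rightarrow> ('a \<Rightarrow> bool) \<Rightarrow> ('a \<Rightarrow> bool)" where
  "nlr_mult f \<alpha> \<beta> = (\<lambda>g. odd (card {(m, k). \<alpha> m \<and> \<beta> k \<and> z2_mult (\<alpha> m) (\<beta> k) \<and> f m k = g}))"

definition subnearring :: "'a set \<Rightarrow> ('a \<Rightarrow> 'a \<Rightarrow> 'a) \<Rightarrow> ('a \<Rightarrow> bool) set \<Rightarrow> bool" where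
  "subnearring L f S \<longleftrightarrow> S \<subseteq> nlr_carrier L \<and> nlr_zero \<in> S
     \<and> (\<forall>a\<in>S. \<forall>b\<in>S. nlr_add a b \<in> S) \<and> (\<forall>a\<in>S. nlr_neg a \<in> S)
     \<and> (\<forall>a\<in>S. \<forall>b\<in>S. nlr_mult f a b \<in> S)"

end

theory Submission
  imports Defs
begin

text \<open>The formal sum \<open>1 \<cdot> e\<close> is idempotent because \<open>e e = e\<close>. In \<open>Z\<^sub>2L\<close> every element
  is its own negative and \<open>a + a = 0\<close>, so for any idempotent \<open>a\<close> the set \<open>{0, a}\<close> is a
  subnear-ring on which \<open>x x = x\<close> holds.\<close>

definition nlr_of :: "'a \<Rightarrow> 'a \<Rightarrow> bool" where
  "nlr_of x = (\<lambda>m. m = x)"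

lemma nlr_of_in_carrier: "x \<in> L \<Longrightarrow> nlr_of x \<in> nlr_carrier L"
  by (simp add: nlr_of_def nlr_carrier_def)

lemma nlr_of_neq_zero: "nlr_of x \<noteq> nlr_zero"
  by (metis nlr_of_def nlr_zero_def)

lemma nlr_zero_in_carrier: "nlr_zero \<in> nlr_carrier L"
  by (simp add: nlr_zero_def nlr_carrier_def)

lemma nlr_add_self: "nlr_add a a = nlr_zero"
  by (simp add: nlr_add_def z2_add_def nlr_zero_def)

lemma nlr_add_zero_left: "nlr_add nlr_zero a = a"
  by (simp add: nlr_add_def z2_add_def nlr_zero_def)

lemma nlr_add_zero_right: "nlr_add a nlr_zero = a"
  by (simp add: nlr_add_def z2_add_def nlr_zero_def)

lemma nlr_neg_eq_self: "nlr_neg a = a"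
  by (simp add: nlr_neg_def z2_neg_def)

lemma nlr_mult_zero_left: "nlr_mult f nlr_zero b = nlr_zero"
  by (simp add: nlr_mult_def nlr_zero_def)

lemma nlr_mult_zero_right: "nlr_mult f a nlr_zero = nlr_zero"
  by (simp add: nlr_mult_def nlr_zero_def)

lemma nlr_mult_of: "nlr_mult f (nlr_of x) (nlr_of y) = nlr_of (f x y)"
proof
  fix g
  have "{(m, k). nlr_of x m \<and> nlr_of y k \<and> z2_mult (nlr_of x m) (nlr_of y k) \<and> f m k = g}
      = (if f x y = g then {(x, y)} else {})"
    by (auto simp: nlr_of_def z2_mult_def)
  then show "nlr_mult f (nlr_of x) (nlr_of y) g = nlr_of (f x y) g"
    by (simp add: nlr_mult_def nlr_of_def)
qed

lemma subnearring_zero_idempotent: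
  assumes "a \<in> nlr_carrier L" and "nlr_mult f a a = a"
  shows "subnearring L f {nlr_zero, a}"
  using assms
  by (auto simp: subnearring_def nlr_zero_in_carrier nlr_add_self nlr_add_zero_left
      nlr_add_zero_right nlr_neg_eq_self nlr_mult_zero_left nlr_mult_zero_right)

theorem theorem3p3p4:
  fixes L :: "'a set" and f :: "'a \<Rightarrow> 'a \<Rightarrow> 'a" and e :: 'a
  assumes "finite L" and "loop L f e"
  shows "\<exists>S. subnearring L f S \<and> S \<noteq> {nlr_zero} \<and> (\<forall>x\<in>S. nlr_mult f x x = x)"
proof -
  have "e \<in> L" and "f e e = e"
    using assms(2) by (auto simp: loop_def)
  then have idem: "nlr_mult f (nlr_of e) (nlr_of e) = nlr_of e"
    and carrier: "nlr_of e \<in> nlr_carrier L"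
    by (simp_all add: nlr_mult_of nlr_of_in_carrier)
  let ?S = "{nlr_zero, nlr_of e}"
  have "subnearring L f ?S"
    using subnearring_zero_idempotent[OF carrier idem] .
  moreover have "?S \<noteq> {nlr_zero}"
    using nlr_of_neq_zero[of e] by auto
  moreover have "\<forall>x\<in>?S. nlr_mult f x x = x"
    using idem nlr_mult_zero_left by auto
  ultimately show ?thesis by blast
qed

end
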